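(* Let $X=\{x_1,\dots,x_n\}$ be a set of Boolean variables and $\mathcal{C}=\{C_1,\dots,C_m\}$ a set of clauses, each consisting of exactly three positive literals. Let $G'$ be the graph constructed from $(\mathcal{C},X)$ as described in the context. Then there is a truth assignment for $X$ such that every clause contains at least one true literal and at least one false literal if and only if $G'$ has a $5$-colouring.
   Context: First construct $(G,L)$: for each $x_i\in X$ introduce two adjacent vertices $x_i$ and $\overline{x}_i$ with $L(x_i)=L(\overline{x}_i)=\{4,5\}$. For each clause $C_j$ introduce two vertices $C_j,C_j'$ with $L(C_j)=L(C_j')=\{1,2,3\}$. Add an edge between every vertex of the form $x_i$ or $\overline{x}_i$ and every vertex of the form $C_j$ or $C_j'$. For each clause $C_j$, fix an order of its literals, say $C_j=\{x_g,x_h,x_i\}$, and add six new vertices $a_{g,j},a_{h,j},a_{i,j},a'_{g,j},a'_{h,j},a'_{i,j}$ with edges $x_ga_{g,j}$, $a_{g,j}C_j$, $x_ha_{h,j}$, $a_{h,j}C_j$, $x_ia_{i,j}$, $a_{i,j}C_j$, $\overline{x}_ga'_{g,j}$, $a'_{g,j}C_j'$, $\overline{x}_ha'_{h,j}$, $a'_{h,j}C_j'$, $\overline{x}_ia'_{i,j}$, $a'_{i,j}C_j'$, and lists $L(a_{g,j})=L(a'_{g,j})=\{1,4\}$, $L(a_{h,j})=L(a'_{h,j})=\{2,4\}$, $L(a_{i,j})=L(a'_{i,j})=\{3,4\}$. Then $G'$ is obtained from $G$ by adding a clique on five new vertices $k_1,\dots,k_5$ and adding an edge between $k_\ell$ and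 a vertex $u\in V(G)$ if and only if $\ell\notin L(u)$. A $5$-colouring is a map from vertices to $\{1,\dots,5\}$ giving adjacent vertices distinct colours. *)

theory Defs
  imports Main
begin

text \<open>Xv i = x_i, Xn i = overline x_i, Cv j = C_j, Cp j = C_j',
  Av p j = a_{(p-th literal of C_j), j}, Ap p j = a'_{(p-th literal of C_j), j}
  (p in {1,2,3} is the position of the literal in the fixed order of C_j), Kv l = k_l.\<close>
datatype vtx = Xv nat | Xn nat | Cv nat | Cp nat | Av nat nat | Ap nat nat | Kv nat

text \<open>A clause C_j is given by the ordered triple cl j = (g,h,i) of its variable indices.
  lit cl j p is the variable index of the p-th literal of C_j.\<close>
definition lit :: "(nat \<Rightarrow> nat \<times> nat \<times> nat) \<Rightarrow> nat \<Rightarrow> nat \<Rightarrow> nat" where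
  "lit cl j p = (case cl j of (g, h, i) \<Rightarrow> if p = 1 then g else if p = 2 then h else i)"

definition G_verts :: "nat \<Rightarrow> nat \<Rightarrow> vtx set" where
  "G_verts n m =
     {Xv i | i. i \<in> {1..n}} \<union> {Xn i | i. i \<in> {1..n}} \<union>
     {Cv j | j. j \<in> {1..m}} \<union> {Cp j | j. j \<in> {1..m}} \<union>
     {Av p j | p j. p \<in> {1,2,3} \<and> j \<in> {1..m}} \<union>
     {Ap p j | p j. p \<in> {1,2,3} \<and> j \<in> {1..m}}"

definition Gp_verts :: "nat \<Rightarrow> nat \<Rightarrow> vtx set" where
  "Gp_verts n m = G_verts n m \<union> {Kv l | l. l \<in> {1..5}}"

fun Lst :: "vtx \<Rightarrow> nat set" where
  "Lst (Xv _) = {4,5}"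
| "Lst (Xn _) = {4,5}"
| "Lst (Cv _) = {1,2,3}"
| "Lst (Cp _) = {1,2,3}"
| "Lst (Av p _) = {p,4}"
| "Lst (Ap p _) = {p,4}"
| "Lst (Kv _) = {}"

definition G_edge0 :: "nat \<Rightarrow> nat \<Rightarrow> (nat \<Rightarrow> nat \<times> nat \<times> nat) \<Rightarrow> vtx \<Rightarrow> vtx \<Rightarrow> bool" where
  "G_edge0 n m cl u v \<longleftrightarrow>
     (\<exists>i\<in>{1..n}. u = Xv i \<and> v = Xn i)
   \<or> (\<exists>i\<in>{1..n}. \<exists>j\<in>{1..m}. u \<in> {Xv i, Xn i} \<and> v \<in> {Cv j, Cp j})
   \<or> (\<exists>j\<in>{1..m}. \<exists>p\<in>{1,2,3}.
        (u = Xv (lit cl j p) \<and> v = Av p j) \<or> (u = Av p j \<and> v = Cv j) \<or>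
        (u = Xn (lit cl j p) \<and> v = Ap p j) \<or> (u = Ap p j \<and> v = Cp j))"

definition G_edge :: "nat \<Rightarrow> nat \<Rightarrow> (nat \<Rightarrow> nat \<times> nat \<times> nat) \<Rightarrow> vtx \<Rightarrow> vtx \<Rightarrow> bool" where
  "G_edge n m cl u v \<longleftrightarrow> G_edge0 n m cl u v \<or> G_edge0 n m cl v u"

definition Gp_edge :: "nat \<Rightarrow> nat \<Rightarrow> (nat \<Rightarrow> nat \<times> nat \<times> nat) \<Rightarrow> vtx \<Rightarrow> vtx \<Rightarrow> bool" where
  "Gp_edge n m cl u v \<longleftrightarrow>
     G_edge n m cl u v
   \<or> (\<exists>l\<in>{1..5}. \<exists>l'\<in>{1..5}. l \<noteq> l' \<and> u = Kv l \<and> v = Kv l')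
   \<or> (\<exists>l\<in>{1..5}. \<exists>w\<in>G_verts n m. l \<notin> Lst w \<and>
        ((u = Kv l \<and> v = w) \<or> (u = w \<and> v = Kv l)))"

definition is_5_colouring :: "'v set \<Rightarrow> ('v \<Rightarrow> 'v \<Rightarrow> bool) \<Rightarrow> ('v \<Rightarrow> nat) \<Rightarrow> bool" where
  "is_5_colouring V E c \<longleftrightarrow>
     (\<forall>v\<in>V. c v \<in> {1..5}) \<and> (\<forall>u\<in>V. \<forall>v\<in>V. E u v \<longrightarrow> c u \<noteq> c v)"

end

(* Renaming colours so that k_l gets colour l, the clique k_1..k_5 forces a 5-colouring of G'
   to colour each vertex u of G from L(u), and conversely every L-colouring of G extends to G'.
   In an L-colouring read colour 5 on x_i as "x_i true". The colour q <= 3 of C_j forces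
   a_{q,j} to 4, hence the q-th literal of C_j to 5, i.e. true; in the same way C_j' forces
   the negation of some literal to 5, so that literal is false. Conversely, given a
   not-all-equal assignment, colour C_j by the position of a true literal, C_j' by the position
   of a false one, and the a-vertex at that position by 4. *)
theory Submission
  imports Defs
begin

definition is_list_colouring ::
    "'v set \<Rightarrow> ('v \<Rightarrow> 'v \<Rightarrow> bool) \<Rightarrow> ('v \<Rightarrow> nat set) \<Rightarrow> ('v \<Rightarrow> nat) \<Rightarrow> bool" where
  "is_list_colouring V E L c \<longleftrightarrow>
     (\<forall>v\<in>V. c v \<in> L v) \<and> (\<forall>u\<in>V. \<forall>v\<in>V. E u v \<longrightarrow> c u \<noteq> c v)"

lemma list_colouring_forced:
  assumes "is_list_colouring V E L c" "u \<in> V" "v \<in> V" "E u v" "L u = {a, b}" "c v = a"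
  shows "c u = b"
  using assms unfolding is_list_colouring_def by fastforce

lemma is_5_colouring_permute:
  assumes "is_5_colouring V E c" "bij_betw \<pi> {1..5} {1..5}"
  shows "is_5_colouring V E (\<pi> \<circ> c)"
proof -
  have "\<pi> x \<noteq> \<pi> y" if "x \<in> {1..5}" "y \<in> {1..5}" "x \<noteq> y" for x y
    using assms(2) that by (metis bij_betw_inv_into_left)
  moreover have "\<pi> x \<in> {1..5}" if "x \<in> {1..5}" for x
    using assms(2) that by (rule bij_betw_apply)
  ultimately show ?thesis
    using assms(1) unfolding is_5_colouring_def by (metis comp_apply)
qed

lemma mem_G_verts [simp]:
  "Xv i \<in> G_verts n m \<longleftrightarrow> i \<in> {1..n}"
  "Xn i \<in> G_verts n m \<longleftrightarrow> i \<in> {1..n}"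
  "Cv j \<in> G_verts n m \<longleftrightarrow> j \<in> {1..m}"
  "Cp j \<in> G_verts n m \<longleftrightarrow> j \<in> {1..m}"
  "Av p j \<in> G_verts n m \<longleftrightarrow> p \<in> {1,2,3} \<and> j \<in> {1..m}"
  "Ap p j \<in> G_verts n m \<longleftrightarrow> p \<in> {1,2,3} \<and> j \<in> {1..m}"
  "Kv l \<notin> G_verts n m"
  by (auto simp: G_verts_def)

lemma Lst_subset_colours: "w \<in> G_verts n m \<Longrightarrow> Lst w \<subseteq> {1..5}"
  by (auto simp: G_verts_def)

lemma G_edge_intros:
  "i \<in> {1..n} \<Longrightarrow> G_edge n m cl (Xv i) (Xn i)"
  "j \<in> {1..m} \<Longrightarrow> p \<in> {1,2,3} \<Longrightarrow> G_edge n m cl (Av p j) (Cv j)"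
  "j \<in> {1..m} \<Longrightarrow> p \<in> {1,2,3} \<Longrightarrow> G_edge n m cl (Ap p j) (Cp j)"
  "j \<in> {1..m} \<Longrightarrow> p \<in> {1,2,3} \<Longrightarrow> G_edge n m cl (Xv (lit cl j p)) (Av p j)"
  "j \<in> {1..m} \<Longrightarrow> p \<in> {1,2,3} \<Longrightarrow> G_edge n m cl (Xn (lit cl j p)) (Ap p j)"
  unfolding G_edge_def G_edge0_def by blast+

lemma Gp_edge_Kv_Kv:
  "l \<in> {1..5} \<Longrightarrow> l' \<in> {1..5} \<Longrightarrow> l \<noteq> l' \<Longrightarrow> Gp_edge n m cl (Kv l) (Kv l')"
  unfolding Gp_edge_def by blast

lemma Gp_edge_Kv_G:
  "l \<in> {1..5} \<Longrightarrow> w \<in> G_verts n m \<Longrightarrow> l \<notin> Lst w \<Longrightarrow> Gp_edge n m cl (Kv l) w"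
  unfolding Gp_edge_def by blast

lemma Gp_colouring_normalise:
  assumes c: "is_5_colouring (Gp_verts n m) (Gp_edge n m cl) c"
  obtains c' where "is_5_colouring (Gp_verts n m) (Gp_edge n m cl) c'"
    "\<forall>l\<in>{1..5}. c' (Kv l) = l"
proof -
  define \<sigma> where "\<sigma> = c \<circ> Kv"
  have Kv_mem: "Kv l \<in> Gp_verts n m" if "l \<in> {1..5}" for l
    using that by (simp add: Gp_verts_def)
  have "inj_on \<sigma> {1..5}"
  proof (rule inj_onI, rule ccontr)
    fix l l' :: nat assume l: "l \<in> {1..5}" "l' \<in> {1..5}" "\<sigma> l = \<sigma> l'" "l \<noteq> l'"
    have "c (Kv l) \<noteq> c (Kv l')"
      using c Kv_mem[OF l(1)] Kv_mem[OF l(2)] Gp_edge_Kv_Kv[OF l(1,2,4)]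
      unfolding is_5_colouring_def by blast
    then show False using l(3) by (simp add: \<sigma>_def)
  qed
  moreover have "\<sigma> ` {1..5} \<subseteq> {1..5}"
    using c Kv_mem unfolding is_5_colouring_def \<sigma>_def by auto
  ultimately have \<sigma>: "bij_betw \<sigma> {1..5} {1..5}"
    by (simp add: bij_betw_def card_image card_subset_eq)
  define \<pi> where "\<pi> = the_inv_into {1..5} \<sigma>"
  have "is_5_colouring (Gp_verts n m) (Gp_edge n m cl) (\<pi> \<circ> c)"
    using c \<sigma> unfolding \<pi>_def by (intro is_5_colouring_permute bij_betw_the_inv_into)
  moreover have "\<forall>l\<in>{1..5}. (\<pi> \<circ> c) (Kv l) = l"
    using \<sigma> the_inv_into_f_f[of \<sigma> "{1..5}"] unfolding \<pi>_def bij_betw_def by (simp add: \<sigma>_def)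
  ultimately show ?thesis by (rule that)
qed

lemma list_colouring_of_Gp_colouring:
  assumes c: "is_5_colouring (Gp_verts n m) (Gp_edge n m cl) c"
    and c_Kv: "\<forall>l\<in>{1..5}. c (Kv l) = l"
  shows "is_list_colouring (G_verts n m) (G_edge n m cl) Lst c"
proof -
  have G_sub: "G_verts n m \<subseteq> Gp_verts n m"
    by (simp add: Gp_verts_def)
  have "c w \<in> Lst w" if w: "w \<in> G_verts n m" for w
  proof (rule ccontr)
    assume not_Lst: "c w \<notin> Lst w"
    have l: "c w \<in> {1..5}"
      using c w G_sub unfolding is_5_colouring_def by blast
    then have "c (Kv (c w)) \<noteq> c w"
      using c w G_sub Gp_edge_Kv_G[OF l w not_Lst]
      unfolding is_5_colouring_def Gp_verts_def by blast
    then show False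
      using c_Kv l by simp
  qed
  moreover have "Gp_edge n m cl u v" if "G_edge n m cl u v" for u v
    using that by (simp add: Gp_edge_def)
  ultimately show ?thesis
    using c G_sub unfolding is_5_colouring_def is_list_colouring_def by blast
qed

lemma Gp_colouring_of_list_colouring:
  assumes c: "is_list_colouring (G_verts n m) (G_edge n m cl) Lst c"
  shows "is_5_colouring (Gp_verts n m) (Gp_edge n m cl) (\<lambda>v. case v of Kv l \<Rightarrow> l | w \<Rightarrow> c w)"
    (is "is_5_colouring _ _ ?c")
proof -
  have c_G: "?c w = c w" if "w \<in> G_verts n m" for w
    using that by (cases w) simp_all
  have c_Lst: "?c w \<in> Lst w" if "w \<in> G_verts n m" for w
    using c that c_G unfolding is_list_colouring_def by simp
  have "?c v \<in> {1..5}" if "v \<in> Gp_verts n m" for v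
  proof (cases "v \<in> G_verts n m")
    case True
    then show ?thesis using c_Lst Lst_subset_colours by blast
  qed (use that in \<open>auto simp: Gp_verts_def\<close>)
  moreover have "?c u \<noteq> ?c v"
    if uv: "u \<in> Gp_verts n m" "v \<in> Gp_verts n m" and "Gp_edge n m cl u v" for u v
  proof -
    consider (G) "G_edge n m cl u v"
      | (clique) l l' where "l \<noteq> l'" "u = Kv l" "v = Kv l'"
      | (list) l w where "w \<in> G_verts n m" "l \<notin> Lst w" "u = Kv l \<and> v = w \<or> u = w \<and> v = Kv l"
      using \<open>Gp_edge n m cl u v\<close> unfolding Gp_edge_def by blast
    then show ?thesis
    proof cases
      case G
      moreover have "u \<in> G_verts n m" "v \<in> G_verts n m"
        using G uv unfolding G_edge_def G_edge0_def Gp_verts_def by auto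
      ultimately show ?thesis
        using c c_G unfolding is_list_colouring_def by simp
    next
      case (list l w)
      then have "?c w \<noteq> l" using c_Lst by blast
      then show ?thesis using list(3) by auto
    qed simp
  qed
  ultimately show ?thesis
    unfolding is_5_colouring_def by blast
qed

lemma Gp_colourable_iff_G_list_colourable:
  "(\<exists>c. is_5_colouring (Gp_verts n m) (Gp_edge n m cl) c)
     \<longleftrightarrow> (\<exists>c. is_list_colouring (G_verts n m) (G_edge n m cl) Lst c)"
  by (metis Gp_colouring_normalise list_colouring_of_Gp_colouring Gp_colouring_of_list_colouring)

lemma lit_mem:
  assumes "case cl j of (g, h, i) \<Rightarrow> g \<in> A \<and> h \<in> A \<and> i \<in> A \<and> P g h i"
  shows "lit cl j p \<in> A"
  using assms by (cases "cl j") (simp add: lit_def)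

definition is_nae_assignment :: "(nat \<Rightarrow> nat \<times> nat \<times> nat) \<Rightarrow> nat \<Rightarrow> (nat \<Rightarrow> bool) \<Rightarrow> bool" where
  "is_nae_assignment cl m \<tau> \<longleftrightarrow>
     (\<forall>j\<in>{1..m}. (\<exists>p\<in>{1,2,3}. \<tau> (lit cl j p)) \<and> (\<exists>p\<in>{1,2,3}. \<not> \<tau> (lit cl j p)))"

fun nae_colouring :: "(nat \<Rightarrow> bool) \<Rightarrow> (nat \<Rightarrow> nat) \<Rightarrow> (nat \<Rightarrow> nat) \<Rightarrow> vtx \<Rightarrow> nat" where
  "nae_colouring \<tau> t f (Xv i) = (if \<tau> i then 5 else 4)"
| "nae_colouring \<tau> t f (Xn i) = (if \<tau> i then 4 else 5)"
| "nae_colouring \<tau> t f (Cv j) = t j"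
| "nae_colouring \<tau> t f (Cp j) = f j"
| "nae_colouring \<tau> t f (Av p j) = (if p = t j then 4 else p)"
| "nae_colouring \<tau> t f (Ap p j) = (if p = f j then 4 else p)"

lemma nae_colouring_is_list_colouring:
  assumes tf: "\<forall>j\<in>{1..m}. t j \<in> {1,2,3} \<and> \<tau> (lit cl j (t j)) \<and>
                           f j \<in> {1,2,3} \<and> \<not> \<tau> (lit cl j (f j))"
  shows "is_list_colouring (G_verts n m) (G_edge n m cl) Lst (nae_colouring \<tau> t f)"
proof -
  let ?c = "nae_colouring \<tau> t f"
  have "?c w \<in> Lst w" if "w \<in> G_verts n m" for w
    using that tf by (auto simp: G_verts_def)
  moreover have "?c u \<noteq> ?c v" if "G_edge0 n m cl u v" for u v
    using that unfolding G_edge0_def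
  proof (elim disjE bexE conjE)
    fix i j assume j: "j \<in> {1..m}" and "u \<in> {Xv i, Xn i}" "v \<in> {Cv j, Cp j}"
    moreover have "t j \<in> {1,2,3}" "f j \<in> {1,2,3}"
      using tf j by auto
    ultimately show ?thesis by (auto split: if_splits)
  qed (use tf in \<open>auto split: if_splits\<close>)
  ultimately show ?thesis
    unfolding is_list_colouring_def G_edge_def by metis
qed

lemma G_list_colourable_of_nae:
  assumes "is_nae_assignment cl m \<tau>"
  shows "\<exists>c. is_list_colouring (G_verts n m) (G_edge n m cl) Lst c"
proof -
  obtain t f where "\<forall>j\<in>{1..m}. t j \<in> {1,2,3} \<and> \<tau> (lit cl j (t j)) \<and>
                                f j \<in> {1,2,3} \<and> \<not> \<tau> (lit cl j (f j))"
    using assms unfolding is_nae_assignment_def by metis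
  then show ?thesis
    by (blast intro: nae_colouring_is_list_colouring)
qed

lemma nae_of_G_list_colouring:
  assumes lits: "\<forall>j\<in>{1..m}. \<forall>p. lit cl j p \<in> {1..n}"
    and c: "is_list_colouring (G_verts n m) (G_edge n m cl) Lst c"
  shows "is_nae_assignment cl m (\<lambda>i. c (Xv i) = 5)"
  unfolding is_nae_assignment_def
proof
  fix j assume j: "j \<in> {1..m}"
  have in_Lst: "c w \<in> Lst w" if "w \<in> G_verts n m" for w
    using c that unfolding is_list_colouring_def by blast
  obtain q where q: "q \<in> {1,2,3}" "c (Cv j) = q"
    using in_Lst[of "Cv j"] j by auto
  obtain q' where q': "q' \<in> {1,2,3}" "c (Cp j) = q'"
    using in_Lst[of "Cp j"] j by auto
  have Av: "c (Av q j) = 4"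
    using list_colouring_forced[OF c _ _ G_edge_intros(2)] j q by auto
  have "c (Xv (lit cl j q)) = 5"
    using list_colouring_forced[OF c _ _ G_edge_intros(4) _ Av] j q lits by auto
  moreover have Ap: "c (Ap q' j) = 4"
    using list_colouring_forced[OF c _ _ G_edge_intros(3)] j q' by auto
  then have "c (Xn (lit cl j q')) = 5"
    using list_colouring_forced[OF c _ _ G_edge_intros(5) _ Ap] j q' lits by auto
  then have "c (Xv (lit cl j q')) = 4"
    using list_colouring_forced[OF c _ _ G_edge_intros(1), where a = 5 and b = 4] j lits
    by (auto simp: insert_commute)
  ultimately show "(\<exists>p\<in>{1,2,3}. c (Xv (lit cl j p)) = 5) \<and>
                   (\<exists>p\<in>{1,2,3}. c (Xv (lit cl j p)) \<noteq> 5)"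
    using q q' by auto
qed

theorem lemma2:
  fixes n m :: nat and cl :: "nat \<Rightarrow> nat \<times> nat \<times> nat"
  assumes "\<forall>j\<in>{1..m}. case cl j of (g, h, i) \<Rightarrow>
             g \<in> {1..n} \<and> h \<in> {1..n} \<and> i \<in> {1..n} \<and> distinct [g, h, i]"
  shows "(\<exists>\<tau> :: nat \<Rightarrow> bool. \<forall>j\<in>{1..m}.
             (\<exists>p\<in>{1,2,3}. \<tau> (lit cl j p)) \<and> (\<exists>p\<in>{1,2,3}. \<not> \<tau> (lit cl j p)))
         \<longleftrightarrow> (\<exists>c. is_5_colouring (Gp_verts n m) (Gp_edge n m cl) c)"
proof -
  have lits: "\<forall>j\<in>{1..m}. \<forall>p. lit cl j p \<in> {1..n}"
  proof (intro ballI allI)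
    fix j p assume "j \<in> {1..m}"
    with assms show "lit cl j p \<in> {1..n}"
      by (intro lit_mem[where P = "\<lambda>g h i. distinct [g, h, i]"]) (rule bspec)
  qed
  have "(\<exists>\<tau>. is_nae_assignment cl m \<tau>) \<longleftrightarrow>
        (\<exists>c. is_list_colouring (G_verts n m) (G_edge n m cl) Lst c)"
    using G_list_colourable_of_nae nae_of_G_list_colouring[OF lits] by blast
  then show ?thesis
    unfolding Gp_colourable_iff_G_list_colourable is_nae_assignment_def .
qed

end
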